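(* Let $S$ be a Strassen preordered semiring. Then for nonzero $x, y \in S$, the following are equivalent: (1) $f(x) \geq f(y)$ for every monotone semiring homomorphism $f : S \to \mathbb{R}_+$. (2) For every $\varepsilon > 0$, there are $m, n \in \mathbb{N}_{>0}$ and nonzero $z \in S$ such that $m \leq \varepsilon n$ and $n\, z\, x + m\, z \geq n\, z\, y$. (3) For every $\varepsilon > 0$, there are $m, n \in \mathbb{N}_{>0}$ and nonzero $z \in S$ such that $\frac{m}{n} \leq 1 + \varepsilon$ and $m\, z\, x \geq n\, z\, y$. (4) For every $\varepsilon > 0$, there are $k, n \in \mathbb{N}_{>0}$ such that $k \leq \varepsilon n$ and $2^k x^n \geq y^n$. Moreover, if $f(x) > f(y)$ for every monotone semiring homomorphism $f : S \to \mathbb{R}_+$, then there are nonzero $z, w \in S$ with $zx + w \geq zy + w$.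
   Context: A semiring is a set with two commutative monoid structures, addition (neutral element $0$) and multiplication (neutral element $1$), with multiplication distributing over addition; a semiring homomorphism preserves $+$, $\cdot$, $0$ and $1$. A preordered semiring is a semiring $S$ with a preorder $\geq$ such that $x \geq y$ implies $x + z \geq y + z$ and $xz \geq yz$ for all $z \in S$. A semiring homomorphism between preordered semirings is monotone if it preserves the preorder; $\mathbb{R}_+$ carries its usual order. A preordered semiring $S$ with $1 \geq 0$ is Strassen preordered if the unique homomorphism $\mathbb{N} \to S$ is an order embedding (i.e. for $a,b\in\mathbb{N}$, $a \geq b$ in $S$ iff $a \geq b$ in $\mathbb{N}$), and for every nonzero $x \in S$ there is $\ell \in \mathbb{N}$ with $\ell x \geq 1$ and $\ell \geq x$. $\mathbb{N}_{>0}$ denotes the positive integers. *)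

theory Defs
  imports Main "HOL.Real"
begin

definition preordered_semiring :: "('a::comm_semiring_1 \<Rightarrow> 'a \<Rightarrow> bool) \<Rightarrow> bool" where
  "preordered_semiring ge \<longleftrightarrow>
     (\<forall>x. ge x x) \<and>
     (\<forall>x y z. ge x y \<longrightarrow> ge y z \<longrightarrow> ge x z) \<and>
     (\<forall>x y z. ge x y \<longrightarrow> ge (x + z) (y + z)) \<and>
     (\<forall>x y z. ge x y \<longrightarrow> ge (x * z) (y * z))"

definition strassen_preordered :: "('a::comm_semiring_1 \<Rightarrow> 'a \<Rightarrow> bool) \<Rightarrow> bool" where
  "strassen_preordered ge \<longleftrightarrow>
     preordered_semiring ge \<and>
     ge 1 0 \<and>
     (\<forall>a b :: nat. ge (of_nat a) (of_nat b) \<longleftrightarrow> a \<ge> b) \<and>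
     (\<forall>x. x \<noteq> 0 \<longrightarrow> (\<exists>l :: nat. ge (of_nat l * x) 1 \<and> ge (of_nat l) x))"

definition mono_hom_Rplus :: "('a::comm_semiring_1 \<Rightarrow> 'a \<Rightarrow> bool) \<Rightarrow> ('a \<Rightarrow> real) \<Rightarrow> bool" where
  "mono_hom_Rplus ge f \<longleftrightarrow>
     (\<forall>x. f x \<ge> 0) \<and>
     f 0 = 0 \<and> f 1 = 1 \<and>
     (\<forall>x y. f (x + y) = f x + f y) \<and>
     (\<forall>x y. f (x * y) = f x * f y) \<and>
     (\<forall>x y. ge x y \<longrightarrow> f x \<ge> f y)"

end

(*
  The core is a separation statement: if f a > f b for every monotone homomorphism f to R+,
  then z a + w >= z b + w for some nonzero z and w. Otherwise b >= a can be adjoined to the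
  preorder, closing under cancellation of nonzero factors and summands, and the semiring stays
  Strassen preordered. By Zorn's lemma this extends to a maximal cancellative Strassen
  preorder, which is total; for a total Strassen preorder M the map
  a |-> sup {m / n. n a >= m in M} is a monotone homomorphism, and it violates f a > f b.

  Applied to n x + 1 and n y, the separation turns f x >= f y into (2), after removing the
  additive catalyst w with the Archimedean property; (3) follows by absorbing the slack
  m z into a multiple of z x, using l x >= 1. Condition (3) for x^N and y^N gives
  (n z) (2 x^N) >= (n z) y^N, and removing the multiplicative catalyst costs only a
  constant factor, which yields (4). Conversely, (2) implies (3), and evaluating a
  homomorphism on (3) or (4) gives f x >= f y up to an arbitrarily small error, because f is
  positive on nonzero elements.
*)

theory Submission
  imports Defs
begin

lemma
  assumes "mono_hom_Rplus ge f"
  shows mono_hom_Rplus_nonneg: "0 \<le> f a"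
    and mono_hom_Rplus_0: "f 0 = 0"
    and mono_hom_Rplus_1: "f 1 = 1"
    and mono_hom_Rplus_add: "f (a + b) = f a + f b"
    and mono_hom_Rplus_mult: "f (a * b) = f a * f b"
    and mono_hom_Rplus_mono: "ge a b \<Longrightarrow> f b \<le> f a"
  using assms unfolding mono_hom_Rplus_def by blast+

lemma mono_hom_Rplus_of_nat: "mono_hom_Rplus ge f \<Longrightarrow> f (of_nat n) = real n"
  by (induction n) (simp_all add: mono_hom_Rplus_0 mono_hom_Rplus_1 mono_hom_Rplus_add)

lemma mono_hom_Rplus_power: "mono_hom_Rplus ge f \<Longrightarrow> f (a ^ n) = f a ^ n"
  by (induction n) (simp_all add: mono_hom_Rplus_1 mono_hom_Rplus_mult)

lemma mono_hom_Rplus_subrel: "mono_hom_Rplus Q f \<Longrightarrow> R \<le> Q \<Longrightarrow> mono_hom_Rplus R f"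
  unfolding mono_hom_Rplus_def by blast

locale strassen_semiring =
  fixes ge :: "'a::comm_semiring_1 \<Rightarrow> 'a \<Rightarrow> bool" (infix \<open>\<succeq>\<close> 50)
  assumes strassen: "strassen_preordered (\<succeq>)"
begin

lemma
  shows ge_refl: "a \<succeq> a"
    and ge_trans [trans]: "a \<succeq> b \<Longrightarrow> b \<succeq> c \<Longrightarrow> a \<succeq> c"
    and ge_add_right: "a \<succeq> b \<Longrightarrow> a + c \<succeq> b + c"
    and ge_mult_right: "a \<succeq> b \<Longrightarrow> a * c \<succeq> b * c"
    and one_ge_zero: "1 \<succeq> 0"
    and of_nat_ge_iff: "of_nat m \<succeq> of_nat n \<longleftrightarrow> n \<le> m"
    and ge_archimedean: "a \<noteq> 0 \<Longrightarrow> \<exists>l. of_nat l * a \<succeq> 1 \<and> of_nat l \<succeq> a"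
  using strassen unfolding strassen_preordered_def preordered_semiring_def
  by (elim conjE; simp; fail)+

lemma ge_add_left: "a \<succeq> b \<Longrightarrow> c + a \<succeq> c + b"
  using ge_add_right[of a b c] by (simp add: add.commute)

lemma ge_mult_left: "a \<succeq> b \<Longrightarrow> c * a \<succeq> c * b"
  using ge_mult_right[of a b c] by (simp add: mult.commute)

lemma ge_add: "a \<succeq> b \<Longrightarrow> c \<succeq> d \<Longrightarrow> a + c \<succeq> b + d"
  using ge_add_right ge_add_left ge_trans by blast

lemma ge_mult: "a \<succeq> b \<Longrightarrow> c \<succeq> d \<Longrightarrow> a * c \<succeq> b * d"
  using ge_mult_right ge_mult_left ge_trans by blast

lemma ge_zero: "a \<succeq> 0"
  using ge_mult_right[OF one_ge_zero, of a] by simp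

lemma ge_add_self: "a + b \<succeq> a"
  using ge_add_left[OF ge_zero, of a b] by simp

lemma ge_of_nat_bound: "\<exists>l. of_nat l \<succeq> a"
proof (cases "a = 0")
  case True
  then show ?thesis using ge_refl[of 0] by (metis of_nat_0)
qed (use ge_archimedean in blast)

lemma ge_archimedean_one: "a \<noteq> 0 \<Longrightarrow> \<exists>l. of_nat l * a \<succeq> 1"
  using ge_archimedean by blast

lemma not_zero_ge_one: "\<not> 0 \<succeq> 1"
  using of_nat_ge_iff[of 0 1] by simp

lemma nonzero_add:
  fixes a b :: 'a
  assumes "a \<noteq> 0"
  shows "a + b \<noteq> 0"
proof
  assume "a + b = 0"
  obtain l where "of_nat l * a \<succeq> 1" using ge_archimedean_one[OF \<open>a \<noteq> 0\<close>] ..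
  have "0 = of_nat l * (a + b)" using \<open>a + b = 0\<close> by simp
  also have "\<dots> \<succeq> of_nat l * a" by (simp add: ge_add_self distrib_left)
  also have "\<dots> \<succeq> 1" by fact
  finally show False using not_zero_ge_one by simp
qed

lemma nonzero_mult:
  fixes a b :: 'a
  assumes "a \<noteq> 0" "b \<noteq> 0"
  shows "a * b \<noteq> 0"
proof
  assume "a * b = 0"
  obtain k l where "of_nat k * a \<succeq> 1" "of_nat l * b \<succeq> 1"
    using ge_archimedean_one assms by blast
  then have "of_nat k * a * (of_nat l * b) \<succeq> 1 * 1" by (rule ge_mult)
  moreover have "of_nat k * a * (of_nat l * b) = of_nat k * of_nat l * (a * b)"
    by (simp add: mult_ac)
  ultimately show False using \<open>a * b = 0\<close> not_zero_ge_one by simp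
qed

lemma of_nat_nonzero: "0 < n \<Longrightarrow> (of_nat n :: 'a) \<noteq> 0"
  using of_nat_ge_iff[of 0 n] ge_refl[of 0] by auto

lemma one_nonzero: "(1 :: 'a) \<noteq> 0"
  using of_nat_nonzero[of 1] by simp

lemma power_nonzero: "(a :: 'a) \<noteq> 0 \<Longrightarrow> a ^ n \<noteq> 0"
  by (induction n) (simp_all add: nonzero_mult)

lemma not_ge_add_nonzero:
  assumes "t \<noteq> 0"
  shows "\<not> w \<succeq> t + w"
proof
  assume absorb: "w \<succeq> t + w"
  have iterate: "w \<succeq> of_nat k * t + w" for k
  proof (induction k)
    case (Suc k)
    have "w \<succeq> t + w" by (fact absorb)
    also have "\<dots> \<succeq> t + (of_nat k * t + w)" using Suc.IH by (rule ge_add_left)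
    finally show ?case by (simp add: algebra_simps)
  qed (simp add: ge_refl)
  obtain l where l: "of_nat l \<succeq> w" using ge_of_nat_bound ..
  obtain m where m: "of_nat m * t \<succeq> 1" using ge_archimedean_one[OF assms] ..
  have "(of_nat (l * m) :: 'a) = of_nat m * of_nat l" by (simp add: mult_ac)
  also have "\<dots> \<succeq> of_nat m * (of_nat (l * m + 1) * t + w)"
    using ge_trans[OF l iterate] by (rule ge_mult_left)
  also have "\<dots> = of_nat (l * m + 1) * (of_nat m * t) + of_nat m * w"
    by (simp add: algebra_simps)
  also have "\<dots> \<succeq> of_nat (l * m + 1) * (of_nat m * t)" by (rule ge_add_self)
  also have "\<dots> \<succeq> of_nat (l * m + 1) * 1" using m by (rule ge_mult_left)
  finally show False using of_nat_ge_iff[of "l * m" "l * m + 1"] by simp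
qed

lemma add_catalyst_bound:
  assumes "z \<noteq> 0" and catalytic: "z * a + w \<succeq> z * b + w"
  obtains L where "\<And>k. of_nat k * z * a + of_nat L * z \<succeq> of_nat k * z * b"
proof -
  have iterate: "of_nat k * z * a + w \<succeq> of_nat k * z * b + w" for k
  proof (induction k)
    case (Suc k)
    have "of_nat (Suc k) * z * a + w = z * a + (of_nat k * z * a + w)" by (simp add: algebra_simps)
    also have "\<dots> \<succeq> z * a + (of_nat k * z * b + w)" using Suc.IH by (rule ge_add_left)
    also have "\<dots> = (z * a + w) + of_nat k * z * b" by (simp add: algebra_simps)
    also have "\<dots> \<succeq> (z * b + w) + of_nat k * z * b" using catalytic by (rule ge_add_right)
    also have "\<dots> = of_nat (Suc k) * z * b + w" by (simp add: algebra_simps)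
    finally show ?case .
  qed (simp add: ge_refl)
  obtain l where l: "of_nat l \<succeq> w" using ge_of_nat_bound ..
  obtain m where m: "of_nat m * z \<succeq> 1" using ge_archimedean_one[OF \<open>z \<noteq> 0\<close>] ..
  have "of_nat (l * m) * z = of_nat l * (of_nat m * z)" by (simp add: mult_ac)
  also have "\<dots> \<succeq> of_nat l * 1" using m by (rule ge_mult_left)
  also have "\<dots> \<succeq> w" using l by simp
  finally have w_bound: "of_nat (l * m) * z \<succeq> w" .
  show ?thesis
  proof (rule that)
    fix k
    have "of_nat k * z * a + of_nat (l * m) * z \<succeq> of_nat k * z * a + w"
      using w_bound by (rule ge_add_left)
    also have "\<dots> \<succeq> of_nat k * z * b + w" by (fact iterate)
    also have "\<dots> \<succeq> of_nat k * z * b" by (fact ge_add_self)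
    finally show "of_nat k * z * a + of_nat (l * m) * z \<succeq> of_nat k * z * b" .
  qed
qed

lemma mult_catalyst_bound:
  assumes "z \<noteq> 0" and catalytic: "z * a \<succeq> z * b"
  obtains C where "\<And>j. of_nat C * a ^ j \<succeq> b ^ j"
proof -
  have iterate: "z * a ^ j \<succeq> z * b ^ j" for j
  proof (induction j)
    case (Suc j)
    have "z * a ^ Suc j = z * a ^ j * a" by (simp add: algebra_simps)
    also have "\<dots> \<succeq> z * b ^ j * a" using Suc.IH by (rule ge_mult_right)
    also have "\<dots> = b ^ j * (z * a)" by (simp add: algebra_simps)
    also have "\<dots> \<succeq> b ^ j * (z * b)" using catalytic by (rule ge_mult_left)
    also have "\<dots> = z * b ^ Suc j" by (simp add: algebra_simps)
    finally show ?case .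
  qed (simp add: ge_refl)
  obtain l m where l: "of_nat l \<succeq> z" and m: "of_nat m * z \<succeq> 1"
    using ge_archimedean[OF \<open>z \<noteq> 0\<close>] by blast
  show ?thesis
  proof (rule that)
    fix j
    have "of_nat (m * l) * a ^ j = of_nat m * (of_nat l * a ^ j)" by (simp add: mult_ac)
    also have "\<dots> \<succeq> of_nat m * (z * a ^ j)" using l by (intro ge_mult_left ge_mult_right)
    also have "\<dots> \<succeq> of_nat m * (z * b ^ j)" using iterate by (rule ge_mult_left)
    also have "\<dots> = (of_nat m * z) * b ^ j" by (simp add: algebra_simps)
    also have "\<dots> \<succeq> 1 * b ^ j" using m by (rule ge_mult_right)
    finally show "of_nat (m * l) * a ^ j \<succeq> b ^ j" by simp
  qed
qed

lemma mono_hom_Rplus_pos: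
  assumes f: "mono_hom_Rplus (\<succeq>) f" and "a \<noteq> 0"
  shows "0 < f a"
proof -
  obtain l where l: "of_nat l * a \<succeq> 1" using ge_archimedean_one[OF \<open>a \<noteq> 0\<close>] ..
  have "1 = f 1" using f by (rule mono_hom_Rplus_1[symmetric])
  also have "\<dots> \<le> f (of_nat l * a)" using f l by (rule mono_hom_Rplus_mono)
  also have "\<dots> = real l * f a" using f by (simp add: mono_hom_Rplus_mult mono_hom_Rplus_of_nat)
  finally show ?thesis using mono_hom_Rplus_nonneg[OF f, of a] by (cases "f a = 0") auto
qed

lemma strassen_preordered_extension:
  assumes "preordered_semiring R" and ge_le: "(\<succeq>) \<le> R"
    and of_nat_R: "\<And>m n. R (of_nat m) (of_nat n) \<Longrightarrow> n \<le> m"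
  shows "strassen_preordered R"
  unfolding strassen_preordered_def
proof (intro conjI allI impI iffI)
  show "R 1 0" using ge_le one_ge_zero by blast
  show "R (of_nat m) (of_nat n)" if "n \<le> m" for m n
    using ge_le of_nat_ge_iff that by blast
  show "\<exists>l. R (of_nat l * a) 1 \<and> R (of_nat l) a" if "a \<noteq> 0" for a
    using ge_le ge_archimedean[OF that] by blast
qed (use assms(1) of_nat_R in auto)

end

definition cancellative :: "('a::comm_semiring_1 \<Rightarrow> 'a \<Rightarrow> bool) \<Rightarrow> bool" where
  "cancellative R \<longleftrightarrow> (\<forall>t u v w. t \<noteq> 0 \<longrightarrow> R (t * u + w) (t * v + w) \<longrightarrow> R u v)"

(* The cancellative closure of R with a >= b adjoined. *)
definition adjoin_ge :: "('a::comm_semiring_1 \<Rightarrow> 'a \<Rightarrow> bool) \<Rightarrow> 'a \<Rightarrow> 'a \<Rightarrow> 'a \<Rightarrow> 'a \<Rightarrow> bool" where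
  "adjoin_ge R a b u v \<longleftrightarrow> (\<exists>t s w. t \<noteq> 0 \<and> R (t * u + s * b + w) (t * v + s * a + w))"

context strassen_semiring
begin

lemma adjoin_ge_extends: "(\<succeq>) \<le> adjoin_ge (\<succeq>) a b"
proof (rule predicate2I)
  fix u v assume "u \<succeq> v"
  then have "1 * u + 0 * b + 0 \<succeq> 1 * v + 0 * a + 0" by simp
  then show "adjoin_ge (\<succeq>) a b u v"
    unfolding adjoin_ge_def using one_nonzero by blast
qed

lemma adjoin_ge_self: "adjoin_ge (\<succeq>) a b a b"
proof -
  have "1 * a + 1 * b + 0 \<succeq> 1 * b + 1 * a + 0" using ge_refl by (simp add: add.commute)
  then show ?thesis unfolding adjoin_ge_def using one_nonzero by blast
qed

lemma cancellative_adjoin_ge: "cancellative (adjoin_ge (\<succeq>) a b)"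
  unfolding cancellative_def
proof (intro allI impI)
  fix t u v w
  assume "t \<noteq> 0" and "adjoin_ge (\<succeq>) a b (t * u + w) (t * v + w)"
  then obtain t' s w' where "t' \<noteq> 0"
    and "t' * (t * u + w) + s * b + w' \<succeq> t' * (t * v + w) + s * a + w'"
    unfolding adjoin_ge_def by blast
  then have "(t' * t) * u + s * b + (t' * w + w') \<succeq> (t' * t) * v + s * a + (t' * w + w')"
    by (simp add: algebra_simps)
  with nonzero_mult[OF \<open>t' \<noteq> 0\<close> \<open>t \<noteq> 0\<close>] show "adjoin_ge (\<succeq>) a b u v"
    unfolding adjoin_ge_def by blast
qed

lemma adjoin_ge_trans:
  assumes "adjoin_ge (\<succeq>) a b u v" "adjoin_ge (\<succeq>) a b v x"
  shows "adjoin_ge (\<succeq>) a b u x"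
proof -
  obtain t1 s1 w1 where "t1 \<noteq> 0" and uv: "t1 * u + s1 * b + w1 \<succeq> t1 * v + s1 * a + w1"
    using assms(1) unfolding adjoin_ge_def by blast
  obtain t2 s2 w2 where "t2 \<noteq> 0" and vx: "t2 * v + s2 * b + w2 \<succeq> t2 * x + s2 * a + w2"
    using assms(2) unfolding adjoin_ge_def by blast
  have "(t2 * t1) * u + (t2 * s1 + t1 * s2) * b + (t2 * w1 + t1 * w2)
      = t2 * (t1 * u + s1 * b + w1) + t1 * (s2 * b + w2)"
    by (simp add: algebra_simps)
  also have "\<dots> \<succeq> t2 * (t1 * v + s1 * a + w1) + t1 * (s2 * b + w2)"
    using uv by (rule ge_add_right[OF ge_mult_left])
  also have "\<dots> = t1 * (t2 * v + s2 * b + w2) + t2 * (s1 * a + w1)"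
    by (simp add: algebra_simps)
  also have "\<dots> \<succeq> t1 * (t2 * x + s2 * a + w2) + t2 * (s1 * a + w1)"
    using vx by (rule ge_add_right[OF ge_mult_left])
  also have "\<dots> = (t2 * t1) * x + (t2 * s1 + t1 * s2) * a + (t2 * w1 + t1 * w2)"
    by (simp add: algebra_simps)
  finally show ?thesis
    using nonzero_mult[OF \<open>t2 \<noteq> 0\<close> \<open>t1 \<noteq> 0\<close>] unfolding adjoin_ge_def by blast
qed

lemma preordered_semiring_adjoin_ge: "preordered_semiring (adjoin_ge (\<succeq>) a b)"
  unfolding preordered_semiring_def
proof (intro conjI allI impI)
  show "adjoin_ge (\<succeq>) a b u u" for u
    using adjoin_ge_extends ge_refl by blast
  show "adjoin_ge (\<succeq>) a b u x" if "adjoin_ge (\<succeq>) a b u v" "adjoin_ge (\<succeq>) a b v x" for u v x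
    using that by (rule adjoin_ge_trans)
next
  fix u v c assume "adjoin_ge (\<succeq>) a b u v"
  then obtain t s w where "t \<noteq> 0" and uv: "t * u + s * b + w \<succeq> t * v + s * a + w"
    unfolding adjoin_ge_def by blast
  have "t * (u + c) + s * b + w = (t * u + s * b + w) + t * c" by (simp add: algebra_simps)
  also have "\<dots> \<succeq> (t * v + s * a + w) + t * c" using uv by (rule ge_add_right)
  also have "\<dots> = t * (v + c) + s * a + w" by (simp add: algebra_simps)
  finally show "adjoin_ge (\<succeq>) a b (u + c) (v + c)"
    using \<open>t \<noteq> 0\<close> unfolding adjoin_ge_def by blast
  have "t * (u * c) + (s * c) * b + w * c = (t * u + s * b + w) * c" by (simp add: algebra_simps)
  also have "\<dots> \<succeq> (t * v + s * a + w) * c" using uv by (rule ge_mult_right)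
  also have "\<dots> = t * (v * c) + (s * c) * a + w * c" by (simp add: algebra_simps)
  finally show "adjoin_ge (\<succeq>) a b (u * c) (v * c)"
    using \<open>t \<noteq> 0\<close> unfolding adjoin_ge_def by blast
qed

lemma of_nat_adjoin_ge:
  assumes consistent: "\<And>s w. s \<noteq> 0 \<Longrightarrow> \<not> s * b + w \<succeq> s * a + w"
    and "adjoin_ge (\<succeq>) a b (of_nat m) (of_nat n)"
  shows "n \<le> m"
proof (rule ccontr)
  assume "\<not> n \<le> m"
  obtain t s w where "t \<noteq> 0" and mn: "t * of_nat m + s * b + w \<succeq> t * of_nat n + s * a + w"
    using assms(2) unfolding adjoin_ge_def by blast
  define W where "W = w + t * of_nat m"
  have "s * b + W = t * of_nat m + s * b + w" by (simp add: W_def algebra_simps)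
  also have "\<dots> \<succeq> t * of_nat n + s * a + w" by (fact mn)
  also have "\<dots> \<succeq> t * of_nat (Suc m) + s * a + w"
  proof (rule ge_add_right[OF ge_add_right[OF ge_mult_left]])
    show "of_nat n \<succeq> of_nat (Suc m)" using \<open>\<not> n \<le> m\<close> by (subst of_nat_ge_iff) simp
  qed
  also have "\<dots> = t + (s * a + W)" by (simp add: W_def algebra_simps)
  finally have absorb: "s * b + W \<succeq> t + (s * a + W)" .
  show False
  proof (cases "s = 0")
    case True
    then show False using absorb not_ge_add_nonzero[OF \<open>t \<noteq> 0\<close>] by simp
  next
    case False
    have "t + (s * a + W) \<succeq> s * a + W" using ge_add_self by (subst add.commute)
    with absorb have "s * b + W \<succeq> s * a + W" by (rule ge_trans)
    with consistent[OF False] show False by blast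
  qed
qed

lemma strassen_adjoin_ge:
  assumes "\<And>s w. s \<noteq> 0 \<Longrightarrow> \<not> s * b + w \<succeq> s * a + w"
  shows "strassen_preordered (adjoin_ge (\<succeq>) a b)"
  using preordered_semiring_adjoin_ge adjoin_ge_extends of_nat_adjoin_ge[OF assms]
  by (rule strassen_preordered_extension)

lemma total_if_maximal_cancellative:
  assumes "cancellative (\<succeq>)"
    and maximal: "\<And>R. strassen_preordered R \<Longrightarrow> cancellative R \<Longrightarrow> (\<succeq>) \<le> R \<Longrightarrow> R = (\<succeq>)"
  shows "a \<succeq> b \<or> b \<succeq> a"
proof (rule disjCI)
  assume "\<not> b \<succeq> a"
  with assms(1) have "\<not> s * b + w \<succeq> s * a + w" if "s \<noteq> 0" for s w
    using that unfolding cancellative_def by blast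
  then have "adjoin_ge (\<succeq>) a b = (\<succeq>)"
    by (rule maximal[OF strassen_adjoin_ge cancellative_adjoin_ge adjoin_ge_extends])
  with adjoin_ge_self show "a \<succeq> b" by metis
qed

lemma chain_Sup_strassen_cancellative:
  assumes "C \<noteq> {}"
    and members: "\<And>R. R \<in> C \<Longrightarrow> strassen_preordered R \<and> cancellative R \<and> (\<succeq>) \<le> R"
    and chain: "\<And>R R'. R \<in> C \<Longrightarrow> R' \<in> C \<Longrightarrow> R \<le> R' \<or> R' \<le> R"
  shows "strassen_preordered (Sup C) \<and> cancellative (Sup C) \<and> (\<succeq>) \<le> Sup C"
proof (intro conjI)
  have member: "strassen_semiring R" if "R \<in> C" for R
    using members[OF that] by (simp add: strassen_semiring_def)
  obtain R0 where "R0 \<in> C" using \<open>C \<noteq> {}\<close> by blast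
  then have "(\<succeq>) \<le> R0" "R0 \<le> Sup C" using members by (auto intro: Sup_upper)
  then show ge_le: "(\<succeq>) \<le> Sup C" by (rule order_trans)
  have preordered: "preordered_semiring (Sup C)"
    unfolding preordered_semiring_def
  proof (intro conjI allI impI)
    show "(Sup C) u u" for u using ge_le ge_refl by (rule predicate2D)
  next
    fix u v x assume "(Sup C) u v" "(Sup C) v x"
    then obtain R R' where R: "R \<in> C" "R u v" and R': "R' \<in> C" "R' v x" by auto
    consider "R \<le> R'" | "R' \<le> R" using chain[OF R(1) R'(1)] by blast
    then show "(Sup C) u x"
    proof cases
      case 1
      have "R' u x" using predicate2D[OF 1 R(2)] R'(2)
        by (rule strassen_semiring.ge_trans[OF member[OF R'(1)]])
      then show ?thesis using R'(1) by auto
    next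
      case 2
      have "R u x" using R(2) predicate2D[OF 2 R'(2)]
        by (rule strassen_semiring.ge_trans[OF member[OF R(1)]])
      then show ?thesis using R(1) by auto
    qed
  next
    fix u v c assume "(Sup C) u v"
    then obtain R where R: "R \<in> C" "R u v" by auto
    show "(Sup C) (u + c) (v + c)"
      using strassen_semiring.ge_add_right[OF member[OF R(1)] R(2)] R(1) by auto
    show "(Sup C) (u * c) (v * c)"
      using strassen_semiring.ge_mult_right[OF member[OF R(1)] R(2)] R(1) by auto
  qed
  have of_nat_Sup: "n \<le> m" if "(Sup C) (of_nat m) (of_nat n)" for m n
  proof -
    from that obtain R where "R \<in> C" "R (of_nat m) (of_nat n)" by auto
    then show ?thesis using strassen_semiring.of_nat_ge_iff[OF member] by blast
  qed
  show "strassen_preordered (Sup C)"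
    using preordered ge_le of_nat_Sup by (rule strassen_preordered_extension)
  show "cancellative (Sup C)"
    unfolding cancellative_def
  proof (intro allI impI)
    fix t u v w assume "t \<noteq> 0" "(Sup C) (t * u + w) (t * v + w)"
    then obtain R where R: "R \<in> C" "R (t * u + w) (t * v + w)" by auto
    have "cancellative R" using members[OF R(1)] by blast
    then have "R u v" using R(2) \<open>t \<noteq> 0\<close> unfolding cancellative_def by blast
    with R(1) show "(Sup C) u v" by auto
  qed
qed

lemma total_strassen_extension:
  assumes "cancellative (\<succeq>)"
  obtains M where "strassen_preordered M" "\<And>a b. M a b \<or> M b a" "(\<succeq>) \<le> M"
proof -
  define \<A> where "\<A> = {R. strassen_preordered R \<and> cancellative R \<and> (\<succeq>) \<le> R}"
  have "\<exists>M\<in>\<A>. \<forall>R\<in>\<A>. M \<le> R \<longrightarrow> R = M"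
  proof (rule predicate_Zorn)
    show "partial_order_on \<A> (relation_of (\<le>) \<A>)"
      by (rule partial_order_on_relation_ofI) auto
  next
    fix C assume C: "C \<in> Chains (relation_of (\<le>) \<A>)"
    show "\<exists>U\<in>\<A>. \<forall>R\<in>C. R \<le> U"
    proof (cases "C = {}")
      case True
      then show ?thesis using strassen assms by (auto simp: \<A>_def)
    next
      case False
      have "Sup C \<in> \<A>"
        unfolding \<A>_def mem_Collect_eq
      proof (rule chain_Sup_strassen_cancellative[OF False])
        show "strassen_preordered R \<and> cancellative R \<and> (\<succeq>) \<le> R" if "R \<in> C" for R
          using Chains_relation_of[OF C] that by (auto simp: \<A>_def)
        show "R \<le> R' \<or> R' \<le> R" if "R \<in> C" "R' \<in> C" for R R'
        proof -
          have "(R, R') \<in> relation_of (\<le>) \<A> \<or> (R', R) \<in> relation_of (\<le>) \<A>"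
            using C that unfolding Chains_def by blast
          then show ?thesis unfolding relation_of_def by blast
        qed
      qed
      moreover have "\<forall>R\<in>C. R \<le> Sup C" by (simp add: Sup_upper)
      ultimately show ?thesis by blast
    qed
  qed
  then obtain M where "M \<in> \<A>" and maximal: "\<And>R. R \<in> \<A> \<Longrightarrow> M \<le> R \<Longrightarrow> R = M" by blast
  then have M: "strassen_preordered M" "cancellative M" "(\<succeq>) \<le> M" by (simp_all add: \<A>_def)
  interpret M: strassen_semiring M by (rule strassen_semiring.intro) (fact M(1))
  have "M a b \<or> M b a" for a b
  proof (rule M.total_if_maximal_cancellative[OF M(2)])
    fix R assume "strassen_preordered R" "cancellative R" "M \<le> R"
    moreover from \<open>M \<le> R\<close> have "(\<succeq>) \<le> R" using M(3) by (rule order_trans[rotated])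
    ultimately show "R = M" using maximal unfolding \<A>_def by blast
  qed
  with M that show thesis by blast
qed

end

lemma real_eq_if_scaled_dist_bounded:
  fixes a b C :: real
  assumes "\<And>n. 0 < n \<Longrightarrow> real n * \<bar>a - b\<bar> \<le> C"
  shows "a = b"
proof (rule ccontr)
  assume "a \<noteq> b"
  then have "0 < \<bar>a - b\<bar>" by simp
  obtain n :: nat where "C / \<bar>a - b\<bar> < real n" using reals_Archimedean2 by blast
  with \<open>0 < \<bar>a - b\<bar>\<close> have "C < real (Suc n) * \<bar>a - b\<bar>"
    by (simp add: field_simps)
  with assms[of "Suc n"] show False by simp
qed

definition lower_ratios :: "('a::comm_semiring_1 \<Rightarrow> 'a \<Rightarrow> bool) \<Rightarrow> 'a \<Rightarrow> real set" where
  "lower_ratios R a = {real m / real n | m n. 0 < n \<and> R (of_nat n * a) (of_nat m)}"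

definition rate :: "('a::comm_semiring_1 \<Rightarrow> 'a \<Rightarrow> bool) \<Rightarrow> 'a \<Rightarrow> real" where
  "rate R a = Sup (lower_ratios R a)"

context strassen_semiring
begin

lemma lower_ratios_nonempty: "lower_ratios (\<succeq>) a \<noteq> {}"
proof -
  have "0 < (1::nat) \<and> of_nat 1 * a \<succeq> of_nat 0" using ge_zero by simp
  then show ?thesis unfolding lower_ratios_def by blast
qed

lemma bdd_above_lower_ratios: "bdd_above (lower_ratios (\<succeq>) a)"
proof -
  obtain l where l: "of_nat l \<succeq> a" using ge_of_nat_bound ..
  have "x \<le> real l" if "x \<in> lower_ratios (\<succeq>) a" for x
  proof -
    from that[unfolded lower_ratios_def] obtain m n
      where x: "x = real m / real n" and "0 < n" and na: "of_nat n * a \<succeq> of_nat m"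
      by blast
    have "of_nat (n * l) = of_nat n * (of_nat l :: 'a)" by simp
    also have "\<dots> \<succeq> of_nat n * a" using l by (rule ge_mult_left)
    also have "\<dots> \<succeq> of_nat m" by (fact na)
    finally have "m \<le> n * l" by (simp only: of_nat_ge_iff)
    then have "real m \<le> real n * real l" by (metis of_nat_le_iff of_nat_mult)
    with \<open>0 < n\<close> show "x \<le> real l" by (simp add: x field_simps)
  qed
  then show ?thesis by (rule bdd_aboveI)
qed

lemma rate_lower:
  assumes "0 < n" "of_nat n * a \<succeq> of_nat m"
  shows "real m \<le> real n * rate (\<succeq>) a"
proof -
  have "real m / real n \<le> rate (\<succeq>) a"
    unfolding rate_def using assms
    by (intro cSup_upper bdd_above_lower_ratios) (auto simp: lower_ratios_def)
  with \<open>0 < n\<close> show ?thesis by (simp add: field_simps)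
qed

lemma rate_upper:
  assumes "0 < n" and ma: "of_nat m \<succeq> of_nat n * a"
  shows "real n * rate (\<succeq>) a \<le> real m"
proof -
  have "rate (\<succeq>) a \<le> real m / real n"
    unfolding rate_def
  proof (rule cSup_least[OF lower_ratios_nonempty])
    fix x assume "x \<in> lower_ratios (\<succeq>) a"
    then obtain m' n'
      where x: "x = real m' / real n'" and "0 < n'" and na: "of_nat n' * a \<succeq> of_nat m'"
      unfolding lower_ratios_def by blast
    have "of_nat (n' * m) = of_nat n' * (of_nat m :: 'a)" by simp
    also have "\<dots> \<succeq> of_nat n' * (of_nat n * a)" using ma by (rule ge_mult_left)
    also have "\<dots> = of_nat n * (of_nat n' * a)" by (simp add: mult_ac)
    also have "\<dots> \<succeq> of_nat n * of_nat m'" using na by (rule ge_mult_left)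
    also have "\<dots> = of_nat (n * m')" by simp
    finally have "n * m' \<le> n' * m" by (simp only: of_nat_ge_iff)
    then have "real n * real m' \<le> real n' * real m" by (metis of_nat_le_iff of_nat_mult)
    with \<open>0 < n\<close> \<open>0 < n'\<close> show "x \<le> real m / real n" by (simp add: x field_simps)
  qed
  with \<open>0 < n\<close> show ?thesis by (simp add: field_simps)
qed

lemma rate_mono:
  assumes "a \<succeq> b"
  shows "rate (\<succeq>) b \<le> rate (\<succeq>) a"
  unfolding rate_def
proof (rule cSup_subset_mono[OF lower_ratios_nonempty bdd_above_lower_ratios])
  have "of_nat n * a \<succeq> of_nat m" if "of_nat n * b \<succeq> of_nat m" for m n
    using ge_mult_left[OF assms] that by (rule ge_trans)
  then show "lower_ratios (\<succeq>) b \<subseteq> lower_ratios (\<succeq>) a"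
    unfolding lower_ratios_def by blast
qed

lemma rate_nonneg: "0 \<le> rate (\<succeq>) a"
  using rate_lower[of 1 a 0] ge_zero by simp

lemma rate_0: "rate (\<succeq>) 0 = 0"
  using rate_upper[of 1 0 0] rate_nonneg[of 0] ge_refl by simp

lemma rate_1: "rate (\<succeq>) 1 = 1"
  using rate_upper[of 1 1 1] rate_lower[of 1 1 1] ge_refl by simp

end

locale total_strassen_semiring = strassen_semiring +
  assumes total: "a \<succeq> b \<or> b \<succeq> a"
begin

lemma rate_approximation:
  assumes "0 < n"
  obtains m where "of_nat n * a \<succeq> of_nat m" "of_nat (Suc m) \<succeq> of_nat n * a"
    "real m \<le> real n * rate (\<succeq>) a" "real n * rate (\<succeq>) a \<le> real m + 1"
proof -
  obtain l where l: "of_nat l \<succeq> a" using ge_of_nat_bound ..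
  have bounded: "m \<le> n * l" if "of_nat n * a \<succeq> of_nat m" for m
  proof -
    have "of_nat (n * l) = of_nat n * (of_nat l :: 'a)" by simp
    also have "\<dots> \<succeq> of_nat n * a" using l by (rule ge_mult_left)
    also have "\<dots> \<succeq> of_nat m" by (fact that)
    finally show ?thesis by (simp only: of_nat_ge_iff)
  qed
  define m where "m = (GREATEST m. of_nat n * a \<succeq> of_nat m)"
  have "of_nat n * a \<succeq> of_nat 0" using ge_zero by simp
  then have below: "of_nat n * a \<succeq> of_nat m"
    unfolding m_def by (rule GreatestI_nat[OF _ bounded])
  have "\<not> of_nat n * a \<succeq> of_nat (Suc m)"
  proof
    assume "of_nat n * a \<succeq> of_nat (Suc m)"
    then have "Suc m \<le> m" unfolding m_def by (rule Greatest_le_nat[OF _ bounded])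
    then show False by simp
  qed
  then have above: "of_nat (Suc m) \<succeq> of_nat n * a" using total by blast
  show ?thesis
    using that[OF below above] rate_lower[OF assms below] rate_upper[OF assms above] by simp
qed

lemma rate_add: "rate (\<succeq>) (a + b) = rate (\<succeq>) a + rate (\<succeq>) b"
proof (rule real_eq_if_scaled_dist_bounded)
  fix n :: nat assume "0 < n"
  obtain ma where a: "of_nat n * a \<succeq> of_nat ma" "of_nat (Suc ma) \<succeq> of_nat n * a"
    "real ma \<le> real n * rate (\<succeq>) a" "real n * rate (\<succeq>) a \<le> real ma + 1"
    using rate_approximation[OF \<open>0 < n\<close>] .
  obtain mb where b: "of_nat n * b \<succeq> of_nat mb" "of_nat (Suc mb) \<succeq> of_nat n * b"
    "real mb \<le> real n * rate (\<succeq>) b" "real n * rate (\<succeq>) b \<le> real mb + 1"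
    using rate_approximation[OF \<open>0 < n\<close>] .
  have "of_nat n * (a + b) \<succeq> of_nat (ma + mb)"
    using ge_add[OF a(1) b(1)] by (simp add: distrib_left)
  then have "real (ma + mb) \<le> real n * rate (\<succeq>) (a + b)" by (rule rate_lower[OF \<open>0 < n\<close>])
  then have lower: "real ma + real mb \<le> real n * rate (\<succeq>) (a + b)" by simp
  have "of_nat (Suc ma + Suc mb) \<succeq> of_nat n * (a + b)"
    using ge_add[OF a(2) b(2)] by (simp only: of_nat_add distrib_left)
  then have "real n * rate (\<succeq>) (a + b) \<le> real (Suc ma + Suc mb)" by (rule rate_upper[OF \<open>0 < n\<close>])
  then have upper: "real n * rate (\<succeq>) (a + b) \<le> real ma + real mb + 2" by simp
  have "real n * \<bar>rate (\<succeq>) (a + b) - (rate (\<succeq>) a + rate (\<succeq>) b)\<bar>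
      = \<bar>real n * (rate (\<succeq>) (a + b) - (rate (\<succeq>) a + rate (\<succeq>) b))\<bar>"
    by (simp add: abs_mult)
  also have "\<dots> \<le> 2"
    using lower upper a(3,4) b(3,4) unfolding abs_le_iff right_diff_distrib distrib_left by linarith
  finally show "real n * \<bar>rate (\<succeq>) (a + b) - (rate (\<succeq>) a + rate (\<succeq>) b)\<bar> \<le> 2" .
qed

lemma rate_mult: "rate (\<succeq>) (a * b) = rate (\<succeq>) a * rate (\<succeq>) b"
proof (rule real_eq_if_scaled_dist_bounded)
  fix n :: nat assume "0 < n"
  obtain ma where a: "of_nat n * a \<succeq> of_nat ma" "of_nat (Suc ma) \<succeq> of_nat n * a"
    "real ma \<le> real n * rate (\<succeq>) a" "real n * rate (\<succeq>) a \<le> real ma + 1"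
    using rate_approximation[OF \<open>0 < n\<close>] .
  obtain mb where b: "of_nat n * b \<succeq> of_nat mb" "of_nat (Suc mb) \<succeq> of_nat n * b"
    "real mb \<le> real n * rate (\<succeq>) b" "real n * rate (\<succeq>) b \<le> real mb + 1"
    using rate_approximation[OF \<open>0 < n\<close>] .
  define X Y Z where "X = real n * rate (\<succeq>) a" and "Y = real n * rate (\<succeq>) b"
    and "Z = real (n * n) * rate (\<succeq>) (a * b)"
  have "0 < n * n" using \<open>0 < n\<close> by simp
  have "of_nat (n * n) * (a * b) \<succeq> of_nat (ma * mb)"
    using ge_mult[OF a(1) b(1)] by (simp add: mult_ac)
  then have "real (ma * mb) \<le> Z" unfolding Z_def by (rule rate_lower[OF \<open>0 < n * n\<close>])
  then have Z_lower: "real ma * real mb \<le> Z" by simp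
  have "of_nat (Suc ma * Suc mb) \<succeq> of_nat (n * n) * (a * b)"
    using ge_mult[OF a(2) b(2)] by (simp only: of_nat_mult mult_ac)
  then have "Z \<le> real (Suc ma * Suc mb)" unfolding Z_def by (rule rate_upper[OF \<open>0 < n * n\<close>])
  then have Z_upper: "Z \<le> (real ma + 1) * (real mb + 1)" by (simp add: algebra_simps)
  have XY_lower: "real ma * real mb \<le> X * Y"
    using a(3) b(3) unfolding X_def Y_def by (intro mult_mono) simp_all
  have XY_upper: "X * Y \<le> (real ma + 1) * (real mb + 1)"
    using a(4) b(4) rate_nonneg unfolding X_def Y_def by (intro mult_mono) simp_all
  have "Z - X * Y = real n * real n * (rate (\<succeq>) (a * b) - rate (\<succeq>) a * rate (\<succeq>) b)"
    unfolding X_def Y_def Z_def by (simp add: algebra_simps)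
  then have "real n * (real n * \<bar>rate (\<succeq>) (a * b) - rate (\<succeq>) a * rate (\<succeq>) b\<bar>) = \<bar>Z - X * Y\<bar>"
    by (simp add: abs_mult)
  also have "\<dots> \<le> real ma + real mb + 1"
    using Z_lower Z_upper XY_lower XY_upper unfolding abs_le_iff distrib_left distrib_right
    by linarith
  also have "\<dots> \<le> real n * (rate (\<succeq>) a + rate (\<succeq>) b + 1)"
    using a(3) b(3) \<open>0 < n\<close> by (simp add: algebra_simps)
  finally show "real n * \<bar>rate (\<succeq>) (a * b) - rate (\<succeq>) a * rate (\<succeq>) b\<bar> \<le> rate (\<succeq>) a + rate (\<succeq>) b + 1"
    using \<open>0 < n\<close> by simp
qed

lemma mono_hom_rate: "mono_hom_Rplus (\<succeq>) (rate (\<succeq>))"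
  unfolding mono_hom_Rplus_def
  by (intro conjI allI impI rate_nonneg rate_0 rate_1 rate_add rate_mult rate_mono)

end

context strassen_semiring
begin

theorem catalytic_ge_if_hom_less:
  assumes "\<And>f. mono_hom_Rplus (\<succeq>) f \<Longrightarrow> f b < f a"
  shows "\<exists>z w. z \<noteq> 0 \<and> w \<noteq> 0 \<and> z * a + w \<succeq> z * b + w"
proof (rule ccontr)
  assume no_catalyst: "\<not> ?thesis"
  have consistent: "\<not> s * a + w \<succeq> s * b + w" if "s \<noteq> 0" for s w
  proof
    assume "s * a + w \<succeq> s * b + w"
    then have "(s * a + w) + 1 \<succeq> (s * b + w) + 1" by (rule ge_add_right)
    then have "s * a + (w + 1) \<succeq> s * b + (w + 1)" by (simp add: add.assoc)
    moreover have "w + 1 \<noteq> 0" using nonzero_add[OF one_nonzero, of w] by (simp add: add.commute)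
    ultimately show False using no_catalyst \<open>s \<noteq> 0\<close> by blast
  qed
  interpret R: strassen_semiring "adjoin_ge (\<succeq>) b a"
    using strassen_adjoin_ge[OF consistent] by (rule strassen_semiring.intro)
  obtain M where M: "strassen_preordered M" "\<And>u v. M u v \<or> M v u" "adjoin_ge (\<succeq>) b a \<le> M"
    using R.total_strassen_extension[OF cancellative_adjoin_ge] by blast
  interpret M: total_strassen_semiring M
    using M(1,2) by (simp add: total_strassen_semiring_def total_strassen_semiring_axioms_def
        strassen_semiring_def)
  have "mono_hom_Rplus (\<succeq>) (rate M)"
    using M.mono_hom_rate order_trans[OF adjoin_ge_extends M(3)] by (rule mono_hom_Rplus_subrel)
  then have "rate M b < rate M a" by (rule assms)
  moreover have "M b a" using M(3) adjoin_ge_self by (rule predicate2D)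
  then have "rate M a \<le> rate M b" by (rule M.rate_mono)
  ultimately show False by simp
qed

lemma approx_catalytic_ge_if_hom_le:
  assumes hom_le: "\<forall>f. mono_hom_Rplus (\<succeq>) f \<longrightarrow> f y \<le> f x" and "0 < \<epsilon>"
  shows "\<exists>m n z. 0 < m \<and> 0 < n \<and> z \<noteq> 0 \<and> real m \<le> \<epsilon> * real n \<and>
           of_nat n * z * x + of_nat m * z \<succeq> of_nat n * z * y"
proof -
  obtain n :: nat where "2 / \<epsilon> < real n" using reals_Archimedean2 by blast
  with \<open>0 < \<epsilon>\<close> have "2 < \<epsilon> * real n" by (simp add: field_simps)
  then have "0 < n" using \<open>0 < \<epsilon>\<close> by (cases n) auto
  have "f (of_nat n * y) < f (of_nat n * x + 1)" if f: "mono_hom_Rplus (\<succeq>) f" for f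
    using hom_le f mult_left_mono[of "f y" "f x" "real n"]
    by (simp add: mono_hom_Rplus_add[OF f] mono_hom_Rplus_mult[OF f] mono_hom_Rplus_of_nat[OF f]
        mono_hom_Rplus_1[OF f])
  then obtain z w where "z \<noteq> 0" and cat: "z * (of_nat n * x + 1) + w \<succeq> z * (of_nat n * y) + w"
    using catalytic_ge_if_hom_less by blast
  obtain L
    where L: "\<And>k. of_nat k * z * (of_nat n * x + 1) + of_nat L * z \<succeq> of_nat k * z * (of_nat n * y)"
    using add_catalyst_bound[OF \<open>z \<noteq> 0\<close> cat] by blast
  define k where "k = L + 1"
  have "of_nat (k * n) * z * x + of_nat (k + L) * z
      = of_nat k * z * (of_nat n * x + 1) + of_nat L * z"
    by (simp add: algebra_simps)
  also have "\<dots> \<succeq> of_nat k * z * (of_nat n * y)" by (rule L)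
  also have "\<dots> = of_nat (k * n) * z * y" by (simp add: algebra_simps)
  finally have ge: "of_nat (k * n) * z * x + of_nat (k + L) * z \<succeq> of_nat (k * n) * z * y" .
  have "real (k + L) \<le> 2 * real k" by (simp add: k_def)
  also have "\<dots> \<le> (\<epsilon> * real n) * real k" using \<open>2 < \<epsilon> * real n\<close> by (intro mult_right_mono) auto
  finally have "real (k + L) \<le> \<epsilon> * real (k * n)" by (simp add: mult_ac)
  moreover have "0 < k + L" "0 < k * n" using \<open>0 < n\<close> by (simp_all add: k_def)
  ultimately show ?thesis using ge \<open>z \<noteq> 0\<close> by blast
qed

lemma ratio_catalytic_ge_if_approx_catalytic_ge:
  assumes "x \<noteq> 0"
    and approx: "\<forall>\<epsilon>::real. 0 < \<epsilon> \<longrightarrow> (\<exists>m n z. 0 < m \<and> 0 < n \<and> z \<noteq> 0 \<and>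
           real m \<le> \<epsilon> * real n \<and> of_nat n * z * x + of_nat m * z \<succeq> of_nat n * z * y)"
    and "0 < \<epsilon>"
  shows "\<exists>m n z. 0 < m \<and> 0 < n \<and> z \<noteq> 0 \<and> real m / real n \<le> 1 + \<epsilon> \<and>
           of_nat m * z * x \<succeq> of_nat n * z * y"
proof -
  obtain l where l: "of_nat l * x \<succeq> 1" using ge_archimedean_one[OF \<open>x \<noteq> 0\<close>] ..
  then have "0 < l" using not_zero_ge_one by (cases l) auto
  with \<open>0 < \<epsilon>\<close> have "0 < \<epsilon> / real l" by simp
  then obtain m n z where "0 < n" "z \<noteq> 0" and mn: "real m \<le> \<epsilon> / real l * real n"
    and ge: "of_nat n * z * x + of_nat m * z \<succeq> of_nat n * z * y"
    using approx by blast
  have "of_nat (n + m * l) * z * x = of_nat n * z * x + of_nat m * z * (of_nat l * x)"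
    by (simp add: algebra_simps)
  also have "\<dots> \<succeq> of_nat n * z * x + of_nat m * z * 1" using l by (rule ge_add_left[OF ge_mult_left])
  also have "\<dots> \<succeq> of_nat n * z * y" using ge by simp
  finally have "of_nat (n + m * l) * z * x \<succeq> of_nat n * z * y" .
  moreover have "real (n + m * l) / real n \<le> 1 + \<epsilon>"
    using mn \<open>0 < n\<close> \<open>0 < l\<close> by (simp add: field_simps)
  ultimately show ?thesis
    using \<open>0 < n\<close> \<open>z \<noteq> 0\<close> by (intro exI[of _ "n + m * l"] exI[of _ n] exI[of _ z]) simp
qed

lemma hom_le_if_ratio_catalytic_ge:
  assumes ratio: "\<forall>\<epsilon>::real. 0 < \<epsilon> \<longrightarrow> (\<exists>m n z. 0 < m \<and> 0 < n \<and> z \<noteq> 0 \<and>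
           real m / real n \<le> 1 + \<epsilon> \<and> of_nat m * z * x \<succeq> of_nat n * z * y)"
    and f: "mono_hom_Rplus (\<succeq>) f"
  shows "f y \<le> f x"
proof (rule field_le_epsilon)
  fix e :: real assume "0 < e"
  have "0 \<le> f x" using f by (rule mono_hom_Rplus_nonneg)
  define \<delta> where "\<delta> = e / (f x + 1)"
  have "0 < \<delta>" using \<open>0 < e\<close> \<open>0 \<le> f x\<close> by (simp add: \<delta>_def)
  then obtain m n z where "0 < n" "z \<noteq> 0" and mn: "real m / real n \<le> 1 + \<delta>"
    and ge: "of_nat m * z * x \<succeq> of_nat n * z * y"
    using ratio by blast
  have "f z * (real n * f y) \<le> f z * (real m * f x)"
    using mono_hom_Rplus_mono[OF f ge]
    by (simp add: mono_hom_Rplus_mult[OF f] mono_hom_Rplus_of_nat[OF f] mult_ac)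
  then have "real n * f y \<le> real m * f x" using mono_hom_Rplus_pos[OF f \<open>z \<noteq> 0\<close>] by simp
  also have "\<dots> \<le> ((1 + \<delta>) * real n) * f x"
    using mn \<open>0 < n\<close> \<open>0 \<le> f x\<close> by (intro mult_right_mono) (simp_all add: divide_le_eq)
  finally have "real n * f y \<le> real n * ((1 + \<delta>) * f x)" by (simp only: mult_ac)
  then have "f y \<le> (1 + \<delta>) * f x" using \<open>0 < n\<close> by simp
  also have "\<dots> = f x + \<delta> * f x" by (simp add: algebra_simps)
  also have "\<delta> * f x \<le> e" using \<open>0 < e\<close> \<open>0 \<le> f x\<close> by (simp add: \<delta>_def field_simps)
  finally show "f y \<le> f x + e" by simp
qed

lemma power_ge_if_hom_le:
  assumes "x \<noteq> 0" and hom_le: "\<forall>f. mono_hom_Rplus (\<succeq>) f \<longrightarrow> f y \<le> f x" and "0 < \<epsilon>"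
  shows "\<exists>k n. 0 < k \<and> 0 < n \<and> real k \<le> \<epsilon> * real n \<and> 2 ^ k * x ^ n \<succeq> y ^ n"
proof -
  obtain N :: nat where "2 / \<epsilon> < real N" using reals_Archimedean2 by blast
  with \<open>0 < \<epsilon>\<close> have "2 < \<epsilon> * real N" by (simp add: field_simps)
  then have "0 < N" using \<open>0 < \<epsilon>\<close> by (cases N) auto
  have "\<forall>f. mono_hom_Rplus (\<succeq>) f \<longrightarrow> f (y ^ N) \<le> f (x ^ N)"
  proof (intro allI impI)
    fix f assume f: "mono_hom_Rplus (\<succeq>) f"
    have "f y ^ N \<le> f x ^ N" using hom_le f mono_hom_Rplus_nonneg[OF f] by (simp add: power_mono)
    then show "f (y ^ N) \<le> f (x ^ N)" by (simp add: mono_hom_Rplus_power[OF f])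
  qed
  then have "\<forall>\<epsilon>::real. 0 < \<epsilon> \<longrightarrow> (\<exists>m n z. 0 < m \<and> 0 < n \<and> z \<noteq> 0 \<and>
           real m \<le> \<epsilon> * real n \<and> of_nat n * z * x ^ N + of_nat m * z \<succeq> of_nat n * z * y ^ N)"
    using approx_catalytic_ge_if_hom_le by blast
  from ratio_catalytic_ge_if_approx_catalytic_ge[OF power_nonzero[OF \<open>x \<noteq> 0\<close>] this zero_less_one]
  obtain m n z where "0 < n" "z \<noteq> 0" and mn: "real m / real n \<le> 1 + 1"
    and ge: "of_nat m * z * x ^ N \<succeq> of_nat n * z * y ^ N"
    by blast
  have "real m \<le> real (2 * n)" using mn \<open>0 < n\<close> by (simp add: divide_le_eq)
  then have "of_nat (2 * n) \<succeq> (of_nat m :: 'a)" by (simp only: of_nat_le_iff of_nat_ge_iff)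
  have "(of_nat n * z) * (2 * x ^ N) = of_nat (2 * n) * z * x ^ N" by (simp add: algebra_simps)
  also have "\<dots> \<succeq> of_nat m * z * x ^ N"
    using \<open>of_nat (2 * n) \<succeq> of_nat m\<close> by (rule ge_mult_right[OF ge_mult_right])
  also have "\<dots> \<succeq> (of_nat n * z) * y ^ N" using ge by (simp add: mult_ac)
  finally have "(of_nat n * z) * (2 * x ^ N) \<succeq> (of_nat n * z) * y ^ N" .
  moreover have "of_nat n * z \<noteq> 0"
    using nonzero_mult[OF of_nat_nonzero[OF \<open>0 < n\<close>] \<open>z \<noteq> 0\<close>] .
  ultimately obtain C where C: "\<And>j. of_nat C * (2 * x ^ N) ^ j \<succeq> (y ^ N) ^ j"
    using mult_catalyst_bound by blast
  define j where "j = C + 1"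
  have "of_nat (2 ^ C) \<succeq> (of_nat C :: 'a)"
    by (simp only: of_nat_ge_iff) (rule less_imp_le[OF less_exp])
  have "2 ^ (C + j) * x ^ (N * j) = of_nat (2 ^ C) * (2 * x ^ N) ^ j"
    by (simp add: power_add power_mult power_mult_distrib mult_ac)
  also have "\<dots> \<succeq> of_nat C * (2 * x ^ N) ^ j"
    using \<open>of_nat (2 ^ C) \<succeq> of_nat C\<close> by (rule ge_mult_right)
  also have "\<dots> \<succeq> (y ^ N) ^ j" by (rule C)
  also have "\<dots> = y ^ (N * j)" by (simp add: power_mult)
  finally have ge_power: "2 ^ (C + j) * x ^ (N * j) \<succeq> y ^ (N * j)" .
  have "real (C + j) \<le> 2 * real j" by (simp add: j_def)
  also have "\<dots> \<le> (\<epsilon> * real N) * real j" using \<open>2 < \<epsilon> * real N\<close> by (intro mult_right_mono) auto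
  finally have "real (C + j) \<le> \<epsilon> * real (N * j)" by simp
  moreover have "0 < C + j" "0 < N * j" using \<open>0 < N\<close> by (simp_all add: j_def)
  ultimately show ?thesis using ge_power by blast
qed

lemma hom_le_if_power_ge:
  assumes "x \<noteq> 0"
    and power_ge: "\<forall>\<epsilon>::real. 0 < \<epsilon> \<longrightarrow>
           (\<exists>k n. 0 < k \<and> 0 < n \<and> real k \<le> \<epsilon> * real n \<and> 2 ^ k * x ^ n \<succeq> y ^ n)"
    and f: "mono_hom_Rplus (\<succeq>) f"
  shows "f y \<le> f x"
proof (rule ccontr)
  assume "\<not> f y \<le> f x"
  have "0 < f x" using f \<open>x \<noteq> 0\<close> by (rule mono_hom_Rplus_pos)
  define r where "r = f y / f x"
  have "1 < r" and fy: "f y = r * f x"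
    using \<open>\<not> f y \<le> f x\<close> \<open>0 < f x\<close> by (simp_all add: r_def)
  obtain M :: nat where "1 / (r - 1) < real M" using reals_Archimedean2 by blast
  with \<open>1 < r\<close> have "1 < real M * (r - 1)" by (simp add: field_simps)
  then have "0 < M" by (cases M) auto
  then have "0 < 1 / real M" by simp
  then obtain k n where "0 < n" and kn: "real k \<le> 1 / real M * real n"
    and ge: "2 ^ k * x ^ n \<succeq> y ^ n"
    using power_ge by blast
  have "real (k * M) \<le> real n" using kn \<open>0 < M\<close> by (simp add: field_simps)
  then have "k * M \<le> n" by (simp only: of_nat_le_iff)
  have "r ^ n * f x ^ n = f (y ^ n)"
    by (simp add: fy mono_hom_Rplus_power[OF f] power_mult_distrib)
  also have "\<dots> \<le> f (2 ^ k * x ^ n)" using f ge by (rule mono_hom_Rplus_mono)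
  also have "\<dots> = 2 ^ k * f x ^ n"
    using mono_hom_Rplus_of_nat[OF f, of 2]
    by (simp add: mono_hom_Rplus_mult[OF f] mono_hom_Rplus_power[OF f])
  finally have "r ^ n \<le> 2 ^ k" using \<open>0 < f x\<close> by simp
  have "(r ^ M) ^ n = (r ^ n) ^ M" by (simp only: power_mult[symmetric] mult.commute)
  also have "\<dots> \<le> (2 ^ k) ^ M" using \<open>r ^ n \<le> 2 ^ k\<close> \<open>1 < r\<close> by (intro power_mono) auto
  also have "\<dots> = 2 ^ (k * M)" by (simp only: power_mult)
  also have "\<dots> \<le> 2 ^ n" using \<open>k * M \<le> n\<close> by (rule power_increasing) simp
  finally have "(r ^ M) ^ n \<le> 2 ^ n" .
  moreover have "2 < r ^ M"
    using Bernoulli_inequality[of "r - 1" M] \<open>1 < r\<close> \<open>1 < real M * (r - 1)\<close> by simp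
  then have "2 ^ n < (r ^ M) ^ n" using \<open>0 < n\<close> by (intro power_strict_mono) auto
  ultimately show False by simp
qed

end

theorem corollary2p18:
  fixes ge :: "'a::comm_semiring_1 \<Rightarrow> 'a \<Rightarrow> bool" and x y :: 'a
  assumes S: "strassen_preordered ge"
    and x0: "x \<noteq> 0" and y0: "y \<noteq> 0"
  defines "P1 \<equiv> (\<forall>f. mono_hom_Rplus ge f \<longrightarrow> f x \<ge> f y)"
    and "P2 \<equiv> (\<forall>\<epsilon>::real. \<epsilon> > 0 \<longrightarrow>
              (\<exists>m n :: nat. \<exists>z. m > 0 \<and> n > 0 \<and> z \<noteq> 0 \<and>
                 real m \<le> \<epsilon> * real n \<and>
                 ge (of_nat n * z * x + of_nat m * z) (of_nat n * z * y)))"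
    and "P3 \<equiv> (\<forall>\<epsilon>::real. \<epsilon> > 0 \<longrightarrow>
              (\<exists>m n :: nat. \<exists>z. m > 0 \<and> n > 0 \<and> z \<noteq> 0 \<and>
                 real m / real n \<le> 1 + \<epsilon> \<and>
                 ge (of_nat m * z * x) (of_nat n * z * y)))"
    and "P4 \<equiv> (\<forall>\<epsilon>::real. \<epsilon> > 0 \<longrightarrow>
              (\<exists>k n :: nat. k > 0 \<and> n > 0 \<and>
                 real k \<le> \<epsilon> * real n \<and>
                 ge ((2::'a) ^ k * x ^ n) (y ^ n)))"
  shows "(P1 \<longleftrightarrow> P2) \<and> (P1 \<longleftrightarrow> P3) \<and> (P1 \<longleftrightarrow> P4) \<and>
         ((\<forall>f. mono_hom_Rplus ge f \<longrightarrow> f x > f y) \<longrightarrow>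
            (\<exists>z w. z \<noteq> 0 \<and> w \<noteq> 0 \<and> ge (z * x + w) (z * y + w)))"
proof -
  interpret strassen_semiring ge by (rule strassen_semiring.intro) (fact S)
  have "P1 \<Longrightarrow> P2" unfolding P1_def P2_def using approx_catalytic_ge_if_hom_le by blast
  moreover have "P2 \<Longrightarrow> P3"
    unfolding P2_def P3_def using ratio_catalytic_ge_if_approx_catalytic_ge[OF x0] by blast
  moreover have "P3 \<Longrightarrow> P1" unfolding P3_def P1_def using hom_le_if_ratio_catalytic_ge by blast
  moreover have "P1 \<Longrightarrow> P4" unfolding P1_def P4_def using power_ge_if_hom_le[OF x0] by blast
  moreover have "P4 \<Longrightarrow> P1" unfolding P4_def P1_def using hom_le_if_power_ge[OF x0] by blast
  moreover note catalytic_ge_if_hom_less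
  ultimately show ?thesis by blast
qed

end
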